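(* Let $n\ge2$, $k\in\{1,\dots,n\}$, $\epsilon=1/\sqrt{n(n-1)}$, and let the Pauli strings $W_1,\dots,W_n$ on $n-1$ qubits and coefficients $c_1,\dots,c_n$ be as in the context. Define $O_k=\sum_{j=1}^n c_jW_j$ and $\mathcal E_k=W_k$ (so $\mathcal E_k=Z_k$ for $k<n$ and $\mathcal E_n=\prod_{j=1}^{n-1}Z_j$). For $1\le m<n$ let $R_m=\exp(-i\theta_mG_m/2)$, where - for $1\le m<k$: $G_m=iW_{m+1}W_m$, and $\theta_m=\arctan(\sqrt m)$ if $m<k-1$, $\theta_{k-1}=\arctan\!\big(\sqrt{k-1}\,\epsilon/c_k\big)$; - for $k\le m<n$: $G_m=iW_mW_{m+1}$, and $\theta_m=\arctan(\sqrt{n-m})$ if $m>k$, $\theta_k=\arctan\!\Big(\frac{\sqrt{n-k}\,\epsilon}{\sqrt{(k-1)\epsilon^2+c_k^2}}\Big)$. Let $U=U_RU_L$ with $U_L=R_{k-1}R_{k-2}\cdots R_1$ and $U_R=R_kR_{k+1}\cdots R_{n-1}$ (empty products equal the identity). Then $UO_kU^\dagger=\mathcal E_k$.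
   Context: $X_j,Y_j,Z_j$ are Pauli operators on qubit $j$ of an $(n-1)$-qubit system; empty products of $Z$'s are the identity. For $k\ne n$: for $1\le j<k$, $W_j=Y_jZ_{j+1}\cdots Z_{k-1}Y_k$, $c_j=\epsilon$; $W_k=Z_k$, $c_k=\sqrt{(n-1)/n}$; for $k<j<n$, $W_j=X_kZ_{k+1}\cdots Z_{j-1}X_j$, $c_j=\epsilon$; and $W_n=X_kZ_{k+1}\cdots Z_{n-1}$, $c_n=\epsilon$. For $k=n$: for $1\le j<n$, $W_j=-Z_1Z_2\cdots Z_{j-1}X_j$, $c_j=\epsilon$; $W_n=\prod_{j=1}^{n-1}Z_j$, $c_n=\sqrt{(n-1)/n}$. *)

theory Defs
  imports Complex_Main "Jordan_Normal_Form.Matrix"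
begin

definition mat_exp :: "complex mat \<Rightarrow> complex mat" where
  "mat_exp A = mat (dim_row A) (dim_col A)
     (\<lambda>(i,j). \<Sum>t. (A ^\<^sub>m t) $$ (i,j) / of_nat (fact t))"

definition dagger :: "complex mat \<Rightarrow> complex mat" where
  "dagger A = mat (dim_col A) (dim_row A) (\<lambda>(i,j). cnj (A $$ (j,i)))"

definition kron :: "complex mat \<Rightarrow> complex mat \<Rightarrow> complex mat" where
  "kron A B = mat (dim_row A * dim_row B) (dim_col A * dim_col B)
     (\<lambda>(i,j). A $$ (i div dim_row B, j div dim_col B) * B $$ (i mod dim_row B, j mod dim_col B))"

datatype pauli = PI | PX | PY | PZ

fun pmat :: "pauli \<Rightarrow> complex mat" where
  "pmat PI = mat_of_rows_list 2 [[1,0],[0,1]]"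
| "pmat PX = mat_of_rows_list 2 [[0,1],[1,0]]"
| "pmat PY = mat_of_rows_list 2 [[0,-\<i>],[\<i>,0]]"
| "pmat PZ = mat_of_rows_list 2 [[1,0],[0,-1]]"

text \<open>Tensor product of single-qubit Paulis; the first list entry is qubit 1.\<close>
definition pstring :: "pauli list \<Rightarrow> complex mat" where
  "pstring ps = foldr (\<lambda>P M. kron (pmat P) M) ps (1\<^sub>m 1)"

definition qop :: "nat \<Rightarrow> pauli \<Rightarrow> nat \<Rightarrow> complex mat" where
  "qop n P j = pstring (map (\<lambda>i. if i = j then P else PI) [1..<n])"

definition dimq :: "nat \<Rightarrow> nat" where
  "dimq n = 2 ^ (n - 1)"

definition mprod :: "nat \<Rightarrow> complex mat list \<Rightarrow> complex mat" where
  "mprod d Ms = foldr (*) Ms (1\<^sub>m d)"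

definition Zs :: "nat \<Rightarrow> nat \<Rightarrow> nat \<Rightarrow> complex mat" where
  "Zs n a b = mprod (dimq n) (map (qop n PZ) [a..<b])"

definition W :: "nat \<Rightarrow> nat \<Rightarrow> nat \<Rightarrow> complex mat" where
  "W n k j =
    (if k \<noteq> n then
       (if j < k then qop n PY j * Zs n (j+1) k * qop n PY k
        else if j = k then qop n PZ k
        else if j < n then qop n PX k * Zs n (k+1) j * qop n PX j
        else qop n PX k * Zs n (k+1) n)
     else
       (if j < n then (-1) \<cdot>\<^sub>m (Zs n 1 j * qop n PX j)
        else Zs n 1 n))"

definition eps :: "nat \<Rightarrow> real" where
  "eps n = 1 / sqrt (real n * (real n - 1))"

definition cc :: "nat \<Rightarrow> nat \<Rightarrow> nat \<Rightarrow> real" where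
  "cc n k j = (if j = k then sqrt ((real n - 1) / real n) else eps n)"

definition Ok :: "nat \<Rightarrow> nat \<Rightarrow> complex mat" where
  "Ok n k = foldr (+) (map (\<lambda>j. complex_of_real (cc n k j) \<cdot>\<^sub>m W n k j) [1..<n+1])
                  (0\<^sub>m (dimq n) (dimq n))"

definition Ek :: "nat \<Rightarrow> nat \<Rightarrow> complex mat" where
  "Ek n k = W n k k"

definition G :: "nat \<Rightarrow> nat \<Rightarrow> nat \<Rightarrow> complex mat" where
  "G n k m = (if m < k then \<i> \<cdot>\<^sub>m (W n k (m+1) * W n k m)
              else \<i> \<cdot>\<^sub>m (W n k m * W n k (m+1)))"

definition theta :: "nat \<Rightarrow> nat \<Rightarrow> nat \<Rightarrow> real" where
  "theta n k m =
    (if m < k then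
       (if m < k - 1 then arctan (sqrt (real m))
        else arctan (sqrt (real (k - 1)) * eps n / cc n k k))
     else
       (if m > k then arctan (sqrt (real (n - m)))
        else arctan (sqrt (real (n - k)) * eps n /
                     sqrt (real (k - 1) * (eps n)^2 + (cc n k k)^2))))"

definition R :: "nat \<Rightarrow> nat \<Rightarrow> nat \<Rightarrow> complex mat" where
  "R n k m = mat_exp ((- \<i> * complex_of_real (theta n k m) / 2) \<cdot>\<^sub>m G n k m)"

definition UL :: "nat \<Rightarrow> nat \<Rightarrow> complex mat" where
  "UL n k = mprod (dimq n) (map (R n k) (rev [1..<k]))"

definition UR :: "nat \<Rightarrow> nat \<Rightarrow> complex mat" where
  "UR n k = mprod (dimq n) (map (R n k) [k..<n])"

definition U :: "nat \<Rightarrow> nat \<Rightarrow> complex mat" where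
  "U n k = UR n k * UL n k"

end

(*
  Up to a sign every W_j is a tensor product of Pauli matrices, so the W_j are Hermitian
  involutions, and two distinct ones anticommute because exactly one qubit carries
  anticommuting factors. For anticommuting Hermitian involutions A and B, the generator
  G = i A B is again a Hermitian involution, exp(-i th G / 2) = cos(th/2) - i sin(th/2) G,
  and conjugation by it rotates the pair (A, B) by th while fixing every operator that
  anticommutes with both. Hence conjugating sum_j v_j W_j by R_m performs a Givens rotation
  on the coefficient vector v. The angles are chosen so that U_L moves the weight of
  W_1, ..., W_(k-1) onto W_k and U_R then moves the weight of W_n, ..., W_(k+1) onto W_k;
  since the coefficients of O_k have Euclidean norm 1, the end result is W_k.
*)

theory Submission
  imports Defs
begin

lemma smult_one_mat [simp]: "(1::'a::monoid_mult) \<cdot>\<^sub>m A = A"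
  by (rule eq_matI) auto

lemma smult_smult_mat [simp]: "(a::'a::semigroup_mult) \<cdot>\<^sub>m (b \<cdot>\<^sub>m A) = (a * b) \<cdot>\<^sub>m A"
  by (rule eq_matI) (auto simp: mult.assoc)

lemma smult_mult_smult_mat:
  fixes A B :: "'a::comm_semiring_0 mat"
  assumes "A \<in> carrier_mat nr n" "B \<in> carrier_mat n nc"
  shows "(x \<cdot>\<^sub>m A) * (y \<cdot>\<^sub>m B) = (x * y) \<cdot>\<^sub>m (A * B)"
proof -
  have "(x \<cdot>\<^sub>m A) * (y \<cdot>\<^sub>m B) = x \<cdot>\<^sub>m (A * (y \<cdot>\<^sub>m B))"
    using assms by (intro mult_smult_assoc_mat) auto
  then show ?thesis
    using assms by (simp add: mult_smult_distrib)
qed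

lemma less_mult_div_mod_bounds: "i < (a::nat) * b \<Longrightarrow> i div b < a \<and> i mod b < b"
  by (metis less_mult_imp_div_less mod_less_divisor mult_0_right not_gr_zero not_less_zero)

lemma sum_lessThan_mult_div_mod:
  fixes g :: "nat \<Rightarrow> nat \<Rightarrow> 'a::comm_monoid_add"
  assumes "0 < b"
  shows "(\<Sum>t<a * b. g (t div b) (t mod b)) = (\<Sum>u<a. \<Sum>v<b. g u v)"
proof -
  have "(\<Sum>t\<in>{u*b..<u*b+b}. g (t div b) (t mod b)) = (\<Sum>v<b. g u v)" for u
  proof -
    have "(\<Sum>t\<in>{u*b..<u*b+b}. g (t div b) (t mod b)) = (\<Sum>v\<in>{0..<b}. g ((v + u*b) div b) ((v + u*b) mod b))"
      using sum.shift_bounds_nat_ivl[of "\<lambda>t. g (t div b) (t mod b)" 0 "u*b" b] by (simp add: add.commute)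
    also have "\<dots> = (\<Sum>v<b. g u v)"
      using assms by (intro sum.cong) auto
    finally show ?thesis .
  qed
  then show ?thesis
    by (simp flip: sum.nat_group)
qed

lemma prod_list_sign_single:
  assumes "distinct L" "i0 \<in> set L" "\<And>i. i \<in> set L \<Longrightarrow> P i \<longleftrightarrow> i = i0"
  shows "(\<Prod>i\<leftarrow>L. if P i then -1 else 1) = (-1::'a::comm_ring_1)"
proof -
  have "(\<Prod>i\<leftarrow>L. if P i then -1 else 1) = (\<Prod>i\<in>set L. if P i then -1 else (1::'a))"
    using assms(1) by (simp add: prod.distinct_set_conv_list)
  also have "\<dots> = (\<Prod>i\<in>set L. if i = i0 then -1 else 1)"
    using assms(3) by (intro prod.cong) auto
  also have "\<dots> = -1"
    using assms(2) by (simp add: prod.delta)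
  finally show ?thesis .
qed

lemma kron_dims [simp]:
  "dim_row (kron A B) = dim_row A * dim_row B" "dim_col (kron A B) = dim_col A * dim_col B"
  by (simp_all add: kron_def)

lemma kron_carrier [simp]: "kron A B \<in> carrier_mat (dim_row A * dim_row B) (dim_col A * dim_col B)"
  by (simp add: kron_def)

lemma kron_index:
  "i < dim_row A * dim_row B \<Longrightarrow> j < dim_col A * dim_col B \<Longrightarrow>
   kron A B $$ (i, j) = A $$ (i div dim_row B, j div dim_col B) * B $$ (i mod dim_row B, j mod dim_col B)"
  by (simp add: kron_def)

lemma kron_mult:
  fixes A B C D :: "complex mat"
  assumes A: "A \<in> carrier_mat a a'" and B: "B \<in> carrier_mat b b'"
    and C: "C \<in> carrier_mat a' c" and D: "D \<in> carrier_mat b' d"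
    and pos: "0 < b" "0 < b'" "0 < d"
  shows "kron A B * kron C D = kron (A * C) (B * D)"
proof (rule eq_matI)
  fix i j assume "i < dim_row (kron (A * C) (B * D))" "j < dim_col (kron (A * C) (B * D))"
  then have i: "i < a * b" and j: "j < c * d" using A B C D by auto
  have "(kron A B * kron C D) $$ (i, j) = (\<Sum>t<a' * b'. kron A B $$ (i, t) * kron C D $$ (t, j))"
    using A B C D i j by (simp add: scalar_prod_def atLeast0LessThan kron_def)
  also have "\<dots> = (\<Sum>t<a' * b'. (A $$ (i div b, t div b') * C $$ (t div b', j div d)) *
                                 (B $$ (i mod b, t mod b') * D $$ (t mod b', j mod d)))"
    using A B C D i j by (intro sum.cong) (auto simp: kron_index)
  also have "\<dots> = (\<Sum>u<a'. \<Sum>v<b'. (A $$ (i div b, u) * C $$ (u, j div d)) *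
                                           (B $$ (i mod b, v) * D $$ (v, j mod d)))"
    by (rule sum_lessThan_mult_div_mod[OF pos(2)])
  also have "\<dots> = (\<Sum>u<a'. A $$ (i div b, u) * C $$ (u, j div d)) *
                   (\<Sum>v<b'. B $$ (i mod b, v) * D $$ (v, j mod d))"
    by (simp add: sum_product)
  also have "\<dots> = kron (A * C) (B * D) $$ (i, j)"
    using A B C D i j pos less_mult_div_mod_bounds[OF i] less_mult_div_mod_bounds[OF j]
    by (simp add: kron_index scalar_prod_def atLeast0LessThan)
  finally show "(kron A B * kron C D) $$ (i, j) = kron (A * C) (B * D) $$ (i, j)" .
qed (use A B C D in auto)

lemma kron_smult_left: "kron (a \<cdot>\<^sub>m A) B = a \<cdot>\<^sub>m kron A B"
  by (rule eq_matI) (auto simp: kron_def less_mult_div_mod_bounds)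

lemma kron_smult_right: "kron A (b \<cdot>\<^sub>m B) = b \<cdot>\<^sub>m kron A B"
  by (rule eq_matI) (auto simp: kron_def less_mult_div_mod_bounds)

lemma kron_one_mat: "kron (1\<^sub>m a) (1\<^sub>m b) = 1\<^sub>m (a * b)"
proof (rule eq_matI)
  fix i j assume "i < dim_row (1\<^sub>m (a * b) :: complex mat)" "j < dim_col (1\<^sub>m (a * b) :: complex mat)"
  then have ij: "i < a * b" "j < a * b" by auto
  moreover have "(i div b = j div b \<and> i mod b = j mod b) = (i = j)"
    by (metis div_mult_mod_eq)
  ultimately show "kron (1\<^sub>m a) (1\<^sub>m b) $$ (i, j) = (1\<^sub>m (a * b) :: complex mat) $$ (i, j)"
    by (auto simp: kron_def less_mult_div_mod_bounds)
qed auto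

lemma dagger_dims [simp]: "dim_row (dagger A) = dim_col A" "dim_col (dagger A) = dim_row A"
  by (simp_all add: dagger_def)

lemma dagger_index [simp]: "i < dim_col A \<Longrightarrow> j < dim_row A \<Longrightarrow> dagger A $$ (i, j) = cnj (A $$ (j, i))"
  by (simp add: dagger_def)

lemma dagger_carrier [simp]: "A \<in> carrier_mat m n \<Longrightarrow> dagger A \<in> carrier_mat n m"
  by (simp add: dagger_def)

lemma dagger_mult:
  assumes "A \<in> carrier_mat a b" "B \<in> carrier_mat b c"
  shows "dagger (A * B) = dagger B * dagger A"
  by (rule eq_matI) (use assms in \<open>auto simp: scalar_prod_def mult.commute\<close>)

lemma dagger_smult: "dagger (a \<cdot>\<^sub>m A) = cnj a \<cdot>\<^sub>m dagger A"
  by (rule eq_matI) auto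

lemma dagger_add: "A \<in> carrier_mat a b \<Longrightarrow> B \<in> carrier_mat a b \<Longrightarrow> dagger (A + B) = dagger A + dagger B"
  by (rule eq_matI) auto

lemma dagger_one [simp]: "dagger (1\<^sub>m d) = 1\<^sub>m d"
  by (rule eq_matI) auto

lemma dagger_kron: "dagger (kron A B) = kron (dagger A) (dagger B)"
  by (rule eq_matI) (auto simp: kron_def less_mult_div_mod_bounds)

fun pauli_mult :: "pauli \<Rightarrow> pauli \<Rightarrow> pauli" where
  "pauli_mult PI q = q"
| "pauli_mult p PI = p"
| "pauli_mult PX PX = PI" | "pauli_mult PY PY = PI" | "pauli_mult PZ PZ = PI"
| "pauli_mult PX PY = PZ" | "pauli_mult PY PX = PZ"
| "pauli_mult PY PZ = PX" | "pauli_mult PZ PY = PX"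
| "pauli_mult PZ PX = PY" | "pauli_mult PX PZ = PY"

fun pauli_phase :: "pauli \<Rightarrow> pauli \<Rightarrow> complex" where
  "pauli_phase PX PY = \<i>" | "pauli_phase PY PX = - \<i>"
| "pauli_phase PY PZ = \<i>" | "pauli_phase PZ PY = - \<i>"
| "pauli_phase PZ PX = \<i>" | "pauli_phase PX PZ = - \<i>"
| "pauli_phase _ _ = 1"

definition pauli_anticomm :: "pauli \<Rightarrow> pauli \<Rightarrow> bool" where
  "pauli_anticomm p q \<longleftrightarrow> p \<noteq> PI \<and> q \<noteq> PI \<and> p \<noteq> q"

lemma pmat_carrier [simp]: "pmat p \<in> carrier_mat 2 2"
  by (cases p) (auto simp: mat_of_rows_list_def)

lemma pmat_dims [simp]: "dim_row (pmat p) = 2" "dim_col (pmat p) = 2"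
  using pmat_carrier by blast+

lemma mat2_eqI:
  fixes A B :: "'a mat"
  assumes "A \<in> carrier_mat 2 2" "B \<in> carrier_mat 2 2"
    "A $$ (0,0) = B $$ (0,0)" "A $$ (0,1) = B $$ (0,1)" "A $$ (1,0) = B $$ (1,0)" "A $$ (1,1) = B $$ (1,1)"
  shows "A = B"
  by (rule eq_matI) (use assms in \<open>auto simp: less_2_cases_iff\<close>)

lemma pmat_mult: "pmat p * pmat q = pauli_phase p q \<cdot>\<^sub>m pmat (pauli_mult p q)"
  by (cases p; cases q; rule mat2_eqI) (auto simp: mat_of_rows_list_def scalar_prod_def numeral_2_eq_2)

lemma pmat_PI: "pmat PI = 1\<^sub>m 2"
  by (rule mat2_eqI) (auto simp: mat_of_rows_list_def)

lemma dagger_pmat: "dagger (pmat p) = pmat p"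
  by (cases p; rule mat2_eqI) (auto simp: mat_of_rows_list_def)

lemma pauli_phase_commute: "pauli_phase q p = (if pauli_anticomm p q then -1 else 1) * pauli_phase p q"
  by (cases p; cases q) (auto simp: pauli_anticomm_def)

lemma pauli_mult_commute: "pauli_mult q p = pauli_mult p q"
  by (cases p; cases q) auto

lemma pauli_mult_self [simp]: "pauli_mult p p = PI"
  by (cases p) auto

lemma pauli_phase_self [simp]: "pauli_phase p p = 1"
  by (cases p) auto

lemma pauli_mult_PI [simp]: "pauli_mult p PI = p"
  by (cases p) auto

lemma pauli_phase_PI: "p = PI \<or> q = PI \<Longrightarrow> pauli_phase p q = 1"
  by (cases p; cases q) auto

lemma pstring_Nil [simp]: "pstring [] = 1\<^sub>m 1"
  by (simp add: pstring_def)

lemma pstring_Cons [simp]: "pstring (p # ps) = kron (pmat p) (pstring ps)"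
  by (simp add: pstring_def)

lemma pstring_carrier [simp]: "pstring ps \<in> carrier_mat (2 ^ length ps) (2 ^ length ps)"
proof (induction ps)
  case (Cons p ps)
  then show ?case
    using kron_carrier[of "pmat p" "pstring ps"] by auto
qed simp

lemma pstring_mult:
  "pstring (map f L) * pstring (map g L) =
     (\<Prod>i\<leftarrow>L. pauli_phase (f i) (g i)) \<cdot>\<^sub>m pstring (map (\<lambda>i. pauli_mult (f i) (g i)) L)"
proof (induction L)
  case Nil
  then show ?case by simp
next
  case (Cons a L)
  have "pstring (map f (a # L)) * pstring (map g (a # L)) =
        kron (pmat (f a) * pmat (g a)) (pstring (map f L) * pstring (map g L))"
  proof -
    have "pstring (map f L) \<in> carrier_mat (2 ^ length L) (2 ^ length L)"
      "pstring (map g L) \<in> carrier_mat (2 ^ length L) (2 ^ length L)"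
      using pstring_carrier by (metis length_map)+
    from kron_mult[OF pmat_carrier this(1) pmat_carrier this(2)] show ?thesis
      by simp
  qed
  also have "\<dots> = (\<Prod>i\<leftarrow>a # L. pauli_phase (f i) (g i)) \<cdot>\<^sub>m pstring (map (\<lambda>i. pauli_mult (f i) (g i)) (a # L))"
    by (simp add: pmat_mult Cons.IH kron_smult_left kron_smult_right mult.commute)
  finally show ?case .
qed

lemma pstring_all_PI: "(\<And>i. i \<in> set L \<Longrightarrow> f i = PI) \<Longrightarrow> pstring (map f L) = 1\<^sub>m (2 ^ length L)"
  by (induction L) (auto simp del: pmat.simps simp: pmat_PI kron_one_mat)

lemma pstring_mult_disjoint:
  assumes "\<And>i. i \<in> set L \<Longrightarrow> f i = PI \<or> g i = PI"
  shows "pstring (map f L) * pstring (map g L) = pstring (map (\<lambda>i. if f i = PI then g i else f i) L)"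
proof -
  have "(\<Prod>i\<leftarrow>L. pauli_phase (f i) (g i)) = 1"
    using assms by (induction L) (auto simp: pauli_phase_PI)
  moreover have "pauli_mult (f i) (g i) = (if f i = PI then g i else f i)" if "i \<in> set L" for i
    using assms[OF that] by (cases "f i = PI") auto
  ultimately show ?thesis
    by (simp add: pstring_mult cong: map_cong)
qed

lemma pstring_square: "pstring (map f L) * pstring (map f L) = 1\<^sub>m (2 ^ length L)"
proof -
  have "(\<Prod>i\<leftarrow>L. pauli_phase (f i) (f i)) = 1"
    by (induction L) auto
  then show ?thesis
    by (simp add: pstring_mult pstring_all_PI)
qed

lemma pstring_commute:
  "pstring (map g L) * pstring (map f L) =
    (\<Prod>i\<leftarrow>L. if pauli_anticomm (f i) (g i) then -1 else 1) \<cdot>\<^sub>m (pstring (map f L) * pstring (map g L))"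
proof -
  have "(\<Prod>i\<leftarrow>L. pauli_phase (g i) (f i)) =
        (\<Prod>i\<leftarrow>L. if pauli_anticomm (f i) (g i) then -1 else 1) * (\<Prod>i\<leftarrow>L. pauli_phase (f i) (g i))"
    by (induction L) (auto simp: pauli_phase_commute[of "g _"])
  then show ?thesis
    by (simp add: pstring_mult pauli_mult_commute[of "g _"])
qed

lemma dagger_pstring: "dagger (pstring ps) = pstring ps"
  by (induction ps) (auto simp: dagger_kron dagger_pmat)

section \<open>The operators \<open>W\<^sub>j\<close> as signed Pauli strings\<close>

definition W_pauli :: "nat \<Rightarrow> nat \<Rightarrow> nat \<Rightarrow> nat \<Rightarrow> pauli" where
  "W_pauli n k j i =
    (if k \<noteq> n then
       (if j < k then (if i = j \<or> i = k then PY else if j < i \<and> i < k then PZ else PI)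
        else if j = k then (if i = k then PZ else PI)
        else if j < n then (if i = k \<or> i = j then PX else if k < i \<and> i < j then PZ else PI)
        else (if i = k then PX else if k < i \<and> i < n then PZ else PI))
     else (if j < n then (if i = j then PX else if i < j then PZ else PI) else PZ))"

definition W_sign :: "nat \<Rightarrow> nat \<Rightarrow> nat \<Rightarrow> complex" where
  "W_sign n k j = (if k = n \<and> j < n then -1 else 1)"

lemma Zs_eq_pstring: "Zs n a b = pstring (map (\<lambda>i. if a \<le> i \<and> i < b then PZ else PI) [1..<n])"
proof (induction "b - a" arbitrary: a)
  case 0
  then show ?case
    by (simp add: Zs_def mprod_def pstring_all_PI dimq_def)
next
  case (Suc x)
  then have "Zs n a b = qop n PZ a * Zs n (Suc a) b"
    by (simp add: Zs_def upt_conv_Cons mprod_def)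
  also have "\<dots> = pstring (map (\<lambda>i. if a \<le> i \<and> i < b then PZ else PI) [1..<n])"
    using Suc by (simp add: qop_def pstring_mult_disjoint) (intro arg_cong[where f = pstring] map_cong; auto)
  finally show ?case .
qed

lemma W_eq_signed_pstring:
  assumes "1 \<le> k" "k \<le> n"
  shows "W n k j = W_sign n k j \<cdot>\<^sub>m pstring (map (W_pauli n k j) [1..<n])"
  using assms
  by (auto simp: W_def W_sign_def qop_def Zs_eq_pstring pstring_mult_disjoint W_pauli_def
      intro!: arg_cong[where f = pstring] arg_cong[where f = "smult_mat (-1)"] map_cong)

lemma W_carrier:
  assumes "1 \<le> k" "k \<le> n"
  shows "W n k j \<in> carrier_mat (dimq n) (dimq n)"
  using pstring_carrier[of "map (W_pauli n k j) [1..<n]"]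
  by (simp add: W_eq_signed_pstring[OF assms] dimq_def)

lemma W_square:
  assumes "1 \<le> k" "k \<le> n"
  shows "W n k j * W n k j = 1\<^sub>m (dimq n)"
  using pstring_carrier[of "map (W_pauli n k j) [1..<n]"]
  by (simp add: W_eq_signed_pstring[OF assms] smult_mult_smult_mat pstring_square W_sign_def dimq_def)

lemma W_hermitian:
  assumes "1 \<le> k" "k \<le> n"
  shows "dagger (W n k j) = W n k j"
  by (simp add: W_eq_signed_pstring[OF assms] dagger_smult dagger_pstring W_sign_def)

lemma W_pauli_anticomm_iff:
  assumes "1 \<le> j" "j < l" "l \<le> n" "1 \<le> k" "k \<le> n" "1 \<le> i" "i < n"
  shows "pauli_anticomm (W_pauli n k j i) (W_pauli n k l i) \<longleftrightarrow>
         i = (if k = n then j else if l < k then l else if j \<le> k then k else j)"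
  using assms by (auto simp: W_pauli_def pauli_anticomm_def)

lemma W_anticomm:
  assumes "1 \<le> j" "j \<le> n" "1 \<le> l" "l \<le> n" "j \<noteq> l" "1 \<le> k" "k \<le> n"
  shows "W n k l * W n k j = (-1) \<cdot>\<^sub>m (W n k j * W n k l)"
proof -
  have "W n k b * W n k a = (-1) \<cdot>\<^sub>m (W n k a * W n k b)" if ab: "1 \<le> a" "a < b" "b \<le> n" for a b
  proof -
    let ?P = "\<lambda>j. pstring (map (W_pauli n k j) [1..<n])"
    define i0 where "i0 = (if k = n then a else if b < k then b else if a \<le> k then k else a)"
    have i0: "i0 \<in> set [1..<n]"
      using ab assms by (auto simp: i0_def)
    have "pauli_anticomm (W_pauli n k a i) (W_pauli n k b i) \<longleftrightarrow> i = i0" if "i \<in> set [1..<n]" for i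
      using W_pauli_anticomm_iff[OF ab(1-3) assms(6,7), of i] that by (simp add: i0_def)
    from prod_list_sign_single[OF _ i0 this]
    have "(\<Prod>i\<leftarrow>[1..<n]. if pauli_anticomm (W_pauli n k a i) (W_pauli n k b i) then -1 else 1) = (-1::complex)"
      by simp
    then have "?P b * ?P a = (-1) \<cdot>\<^sub>m (?P a * ?P b)"
      using pstring_commute[of "W_pauli n k b" "[1..<n]" "W_pauli n k a"] by simp
    moreover have "?P a \<in> carrier_mat (dimq n) (dimq n)" "?P b \<in> carrier_mat (dimq n) (dimq n)"
      using pstring_carrier by (metis dimq_def length_map length_upt)+
    ultimately show ?thesis
      by (simp add: W_eq_signed_pstring[OF assms(6,7)] smult_mult_smult_mat mult.commute)
  qed
  from this[of j l] this[of l j] assms show ?thesis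
    by (cases "j < l") auto
qed

section \<open>Rotations generated by two anticommuting involutions\<close>

lemma pow_smult_involution:
  fixes G :: "complex mat"
  assumes G: "G \<in> carrier_mat d d" and GG: "G * G = 1\<^sub>m d"
  shows "(z \<cdot>\<^sub>m G) ^\<^sub>m t = z ^ t \<cdot>\<^sub>m (if even t then 1\<^sub>m d else G)"
proof (induction t)
  case (Suc t)
  have "(z \<cdot>\<^sub>m G) ^\<^sub>m Suc t = (z ^ t * z) \<cdot>\<^sub>m ((if even t then 1\<^sub>m d else G) * G)"
    using Suc G by (simp add: smult_mult_smult_mat[of _ d d])
  then show ?case
    using G GG by (simp add: mult.commute)
qed (use G in simp)

lemma exp_series_sums: "(\<lambda>t. z ^ t / of_nat (fact t)) sums exp (z::complex)"
  using exp_converges[of z] by (simp add: scaleR_conv_of_real divide_inverse mult.commute)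

lemma suminf_even_odd_exp:
  fixes a b z :: complex
  shows "(\<Sum>t. z ^ t * (if even t then a else b) / of_nat (fact t)) =
         (a + b) / 2 * exp z + (a - b) / 2 * exp (- z)"
proof -
  have "(\<lambda>t. (a + b) / 2 * (z ^ t / of_nat (fact t)) + (a - b) / 2 * ((- z) ^ t / of_nat (fact t)))
        sums ((a + b) / 2 * exp z + (a - b) / 2 * exp (- z))"
    by (intro sums_add sums_mult exp_series_sums)
  moreover have "(a + b) / 2 * (z ^ t / of_nat (fact t)) + (a - b) / 2 * ((- z) ^ t / of_nat (fact t))
        = z ^ t * (if even t then a else b) / of_nat (fact t)" for t
    by (cases "even t") (simp_all add: field_simps)
  ultimately show ?thesis
    by (simp add: sums_iff)
qed

lemma mat_exp_carrier: "A \<in> carrier_mat d d \<Longrightarrow> mat_exp A \<in> carrier_mat d d"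
  using carrier_matD[of A d d] by (simp add: mat_exp_def)

lemma mat_exp_smult_involution:
  fixes G :: "complex mat"
  assumes G: "G \<in> carrier_mat d d" and GG: "G * G = 1\<^sub>m d"
  shows "mat_exp (z \<cdot>\<^sub>m G) = ((exp z + exp (- z)) / 2) \<cdot>\<^sub>m 1\<^sub>m d + ((exp z - exp (- z)) / 2) \<cdot>\<^sub>m G"
proof (rule eq_matI)
  fix i j assume "i < dim_row (((exp z + exp (- z)) / 2) \<cdot>\<^sub>m 1\<^sub>m d + ((exp z - exp (- z)) / 2) \<cdot>\<^sub>m G)"
    "j < dim_col (((exp z + exp (- z)) / 2) \<cdot>\<^sub>m 1\<^sub>m d + ((exp z - exp (- z)) / 2) \<cdot>\<^sub>m G)"
  then have i: "i < d" and j: "j < d" using G by auto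
  have "mat_exp (z \<cdot>\<^sub>m G) $$ (i, j) = (\<Sum>t. ((z \<cdot>\<^sub>m G) ^\<^sub>m t) $$ (i, j) / of_nat (fact t))"
    using i j G by (simp add: mat_exp_def)
  also have "\<dots> = (\<Sum>t. z ^ t * (if even t then 1\<^sub>m d $$ (i, j) else G $$ (i, j)) / of_nat (fact t))"
    using i j G by (intro arg_cong[where f = suminf] ext) (simp add: pow_smult_involution[OF G GG])
  also have "\<dots> = (1\<^sub>m d $$ (i, j) + G $$ (i, j)) / 2 * exp z + (1\<^sub>m d $$ (i, j) - G $$ (i, j)) / 2 * exp (- z)"
    by (rule suminf_even_odd_exp)
  finally show "mat_exp (z \<cdot>\<^sub>m G) $$ (i, j) = (((exp z + exp (- z)) / 2) \<cdot>\<^sub>m 1\<^sub>m d + ((exp z - exp (- z)) / 2) \<cdot>\<^sub>m G) $$ (i, j)"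
    using i j G by (simp add: field_simps)
qed (use G in \<open>auto simp: mat_exp_def\<close>)

lemma exp_half_angle:
  fixes th :: real
  shows "(exp (- \<i> * th / 2) + exp (- (- \<i> * th / 2))) / 2 = cos (th / 2)"
    and "(exp (- \<i> * th / 2) - exp (- (- \<i> * th / 2))) / 2 = - \<i> * sin (th / 2)"
  by (simp_all add: exp_eq_polar cis_conv_exp[symmetric] complex_eq_iff)

lemma sandwich_involution:
  fixes G X :: "complex mat"
  assumes G: "G \<in> carrier_mat d d" and X: "X \<in> carrier_mat d d" and GG: "G * G = 1\<^sub>m d"
    and XG: "X * G = s \<cdot>\<^sub>m (G * X)"
  shows "(a \<cdot>\<^sub>m 1\<^sub>m d + b \<cdot>\<^sub>m G) * X * (a' \<cdot>\<^sub>m 1\<^sub>m d + b' \<cdot>\<^sub>m G)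
       = (a * a' + s * b * b') \<cdot>\<^sub>m X + (s * a * b' + b * a') \<cdot>\<^sub>m (G * X)"
proof -
  have GGX: "G * (G * X) = X"
    using G X by (simp flip: assoc_mult_mat[of G d d G d X d] add: GG)
  show ?thesis
    using G X
    by (simp add: add_mult_distrib_mat[of _ d d _ _ d] mult_add_distrib_mat[of _ d d _ d]
        mult_smult_distrib[of _ d d _ d] mult_smult_assoc_mat[of _ d d _ d] XG GGX)
      (auto intro: eq_matI simp: algebra_simps)
qed

locale anticomm_involutions =
  fixes d :: nat and A B :: "complex mat"
  assumes A: "A \<in> carrier_mat d d" and B: "B \<in> carrier_mat d d"
    and AA: "A * A = 1\<^sub>m d" and BB: "B * B = 1\<^sub>m d"
    and BA: "B * A = (-1) \<cdot>\<^sub>m (A * B)"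
    and herm_A: "dagger A = A" and herm_B: "dagger B = B"
begin

definition gen :: "complex mat" where
  "gen = \<i> \<cdot>\<^sub>m (A * B)"

definition rot :: "real \<Rightarrow> complex mat" where
  "rot th = mat_exp ((- \<i> * th / 2) \<cdot>\<^sub>m gen)"

lemma gen_carrier: "gen \<in> carrier_mat d d"
  using A B by (simp add: gen_def)

lemma AB_carrier: "A * B \<in> carrier_mat d d"
  using A B by simp

lemma gen_square: "gen * gen = 1\<^sub>m d"
proof -
  have "A * B * (A * B) = A * (B * A) * B"
    using A B by (simp add: assoc_mult_mat[of _ d d _ d _ d])
  also have "\<dots> = (-1) \<cdot>\<^sub>m (A * A * (B * B))"
    using A B by (simp add: BA mult_smult_distrib[of _ d d _ d] mult_smult_assoc_mat[of _ d d _ d]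
        assoc_mult_mat[of _ d d _ d _ d])
  finally show ?thesis
    using AB_carrier by (simp add: gen_def smult_mult_smult_mat[of _ d d _ d] AA BB)
qed

lemma gen_hermitian: "dagger gen = gen"
  using A B by (simp add: gen_def dagger_smult dagger_mult[of _ d d] herm_A herm_B BA)

lemma gen_mult_A: "gen * A = (- \<i>) \<cdot>\<^sub>m B"
proof -
  have "A * B * A = (-1) \<cdot>\<^sub>m B"
    using A B by (simp add: BA AA mult_smult_distrib[of _ d d _ d] flip: assoc_mult_mat[of A d d A d B d])
  then show ?thesis
    using A B by (simp add: gen_def mult_smult_assoc_mat[of _ d d _ d])
qed

lemma gen_mult_B: "gen * B = \<i> \<cdot>\<^sub>m A"
  using A B by (simp add: gen_def mult_smult_assoc_mat[of _ d d _ d] BB)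

lemma A_mult_gen: "A * gen = (-1) \<cdot>\<^sub>m (gen * A)"
proof -
  have "A * gen = \<i> \<cdot>\<^sub>m B"
    using A B by (simp add: gen_def mult_smult_distrib[of _ d d _ d] AA flip: assoc_mult_mat[of A d d A d B d])
  then show ?thesis
    by (simp add: gen_mult_A)
qed

lemma B_mult_gen: "B * gen = (-1) \<cdot>\<^sub>m (gen * B)"
proof -
  have "B * gen = (- \<i>) \<cdot>\<^sub>m A"
    using A B by (simp add: gen_def mult_smult_distrib[of _ d d _ d] mult_smult_assoc_mat[of _ d d _ d] BA BB
        flip: assoc_mult_mat[of B d d A d B d])
  then show ?thesis
    by (simp add: gen_mult_B)
qed

lemma mult_gen_if_anticomm:
  assumes C: "C \<in> carrier_mat d d"
    and CA: "C * A = (-1) \<cdot>\<^sub>m (A * C)" and CB: "C * B = (-1) \<cdot>\<^sub>m (B * C)"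
  shows "C * gen = gen * C"
proof -
  have "C * (A * B) = A * B * C"
    using A B C by (simp add: CA CB mult_smult_distrib[of _ d d _ d] mult_smult_assoc_mat[of _ d d _ d]
        flip: assoc_mult_mat[of C d d A d B d])
  then show ?thesis
    using A B C by (simp add: gen_def mult_smult_distrib[of _ d d _ d] mult_smult_assoc_mat[of _ d d _ d])
qed

lemma rot_eq: "rot th = complex_of_real (cos (th / 2)) \<cdot>\<^sub>m 1\<^sub>m d + (- \<i> * complex_of_real (sin (th / 2))) \<cdot>\<^sub>m gen"
  unfolding rot_def mat_exp_smult_involution[OF gen_carrier gen_square] exp_half_angle ..

lemma rot_carrier: "rot th \<in> carrier_mat d d"
  using gen_carrier by (simp add: rot_eq)

lemma dagger_rot: "dagger (rot th) = complex_of_real (cos (th / 2)) \<cdot>\<^sub>m 1\<^sub>m d + (\<i> * complex_of_real (sin (th / 2))) \<cdot>\<^sub>m gen"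
  using gen_carrier by (simp add: rot_eq dagger_add[of _ d d] dagger_smult gen_hermitian)

lemma rot_conj_anticomm:
  assumes X: "X \<in> carrier_mat d d" and XG: "X * gen = (-1) \<cdot>\<^sub>m (gen * X)"
  shows "rot th * X * dagger (rot th) = complex_of_real (cos th) \<cdot>\<^sub>m X + (- \<i> * complex_of_real (sin th)) \<cdot>\<^sub>m (gen * X)"
proof -
  have cos: "cos th = cos (th / 2) * cos (th / 2) - sin (th / 2) * sin (th / 2)"
    and sin: "sin th = 2 * sin (th / 2) * cos (th / 2)"
    using cos_double[of "th / 2"] sin_double[of "th / 2"] by (simp_all add: power2_eq_square)
  show ?thesis
    unfolding dagger_rot unfolding rot_eq sandwich_involution[OF gen_carrier X gen_square XG] cos sin
    by (simp add: algebra_simps)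
qed

lemma rot_conj_commuting:
  assumes X: "X \<in> carrier_mat d d" and XG: "X * gen = gen * X"
  shows "rot th * X * dagger (rot th) = X"
proof -
  have "cos (th / 2) * cos (th / 2) + sin (th / 2) * sin (th / 2) = 1"
    by (simp flip: power2_eq_square)
  then have "complex_of_real (cos (th / 2)) * cos (th / 2) + complex_of_real (sin (th / 2)) * sin (th / 2) = 1"
    by (metis of_real_1 of_real_add of_real_mult)
  moreover have XG1: "X * gen = 1 \<cdot>\<^sub>m (gen * X)"
    using XG by simp
  ultimately show ?thesis
    unfolding dagger_rot unfolding rot_eq sandwich_involution[OF gen_carrier X gen_square XG1]
    using X gen_carrier by (auto intro: eq_matI simp: algebra_simps)
qed

lemma rot_conj_A: "rot th * A * dagger (rot th) = complex_of_real (cos th) \<cdot>\<^sub>m A + complex_of_real (- sin th) \<cdot>\<^sub>m B"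
  using A B by (simp add: rot_conj_anticomm A_mult_gen gen_mult_A mult_ac)

lemma rot_conj_B: "rot th * B * dagger (rot th) = complex_of_real (cos th) \<cdot>\<^sub>m B + complex_of_real (sin th) \<cdot>\<^sub>m A"
  using A B by (simp add: rot_conj_anticomm B_mult_gen gen_mult_B mult_ac)

lemma rot_conj_anticomm_both:
  assumes "C \<in> carrier_mat d d" "C * A = (-1) \<cdot>\<^sub>m (A * C)" "C * B = (-1) \<cdot>\<^sub>m (B * C)"
  shows "rot th * C * dagger (rot th) = C"
  using assms by (simp add: rot_conj_commuting mult_gen_if_anticomm)

end

definition mat_lincomb :: "nat \<Rightarrow> (nat \<Rightarrow> complex mat) \<Rightarrow> (nat \<Rightarrow> real) \<Rightarrow> nat set \<Rightarrow> complex mat" where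
  "mat_lincomb d F v J = mat d d (\<lambda>(r, c). \<Sum>j\<in>J. complex_of_real (v j) * F j $$ (r, c))"

lemma mat_lincomb_dims [simp]: "dim_row (mat_lincomb d F v J) = d" "dim_col (mat_lincomb d F v J) = d"
  by (simp_all add: mat_lincomb_def)

lemma mat_lincomb_carrier [simp]: "mat_lincomb d F v J \<in> carrier_mat d d"
  by (simp add: carrier_matI)

lemma mat_lincomb_empty: "mat_lincomb d F v {} = 0\<^sub>m d d"
  by (rule eq_matI) (auto simp: mat_lincomb_def)

lemma mat_lincomb_insert:
  assumes "finite J" "j \<notin> J" "F j \<in> carrier_mat d d"
  shows "mat_lincomb d F v (insert j J) = complex_of_real (v j) \<cdot>\<^sub>m F j + mat_lincomb d F v J"
  by (rule eq_matI) (use assms in \<open>auto simp: mat_lincomb_def\<close>)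

lemma mat_lincomb_cong: "(\<And>j. j \<in> J \<Longrightarrow> v j = v' j) \<Longrightarrow> mat_lincomb d F v J = mat_lincomb d F v' J"
  unfolding mat_lincomb_def by (intro cong_mat refl) (auto intro!: sum.cong)

lemma mat_lincomb_unit:
  assumes "finite J" "k \<in> J" "F k \<in> carrier_mat d d"
  shows "mat_lincomb d F (\<lambda>j. if j = k then 1 else 0) J = F k"
proof (rule eq_matI)
  fix r c assume "r < dim_row (F k)" "c < dim_col (F k)"
  moreover have "(\<Sum>j\<in>J. complex_of_real (if j = k then 1 else 0) * F j $$ (r, c))
      = (\<Sum>j\<in>J. if j = k then F k $$ (r, c) else 0)"
    by (intro sum.cong) auto
  moreover have "\<dots> = F k $$ (r, c)"
    using assms by simp
  ultimately show "mat_lincomb d F (\<lambda>j. if j = k then 1 else 0) J $$ (r, c) = F k $$ (r, c)"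
    using assms by (simp add: mat_lincomb_def)
qed (use assms in \<open>auto simp: mat_lincomb_def\<close>)

lemma conj_mat_add:
  fixes Q X Y :: "complex mat"
  assumes "Q \<in> carrier_mat d d" "X \<in> carrier_mat d d" "Y \<in> carrier_mat d d"
  shows "Q * (X + Y) * dagger Q = Q * X * dagger Q + Q * Y * dagger Q"
  using assms by (simp add: mult_add_distrib_mat[of _ d d _ d] add_mult_distrib_mat[of _ d d _ _ d])

lemma conj_mat_smult:
  fixes Q X :: "complex mat"
  assumes "Q \<in> carrier_mat d d" "X \<in> carrier_mat d d"
  shows "Q * (a \<cdot>\<^sub>m X) * dagger Q = a \<cdot>\<^sub>m (Q * X * dagger Q)"
  using assms by (simp add: mult_smult_distrib[of _ d d _ d] mult_smult_assoc_mat[of _ d d _ d])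

lemma conj_mat_mult:
  fixes Q P X :: "complex mat"
  assumes Q: "Q \<in> carrier_mat d d" and P: "P \<in> carrier_mat d d" and X: "X \<in> carrier_mat d d"
  shows "Q * P * X * dagger (Q * P) = Q * (P * X * dagger P) * dagger Q"
proof -
  have PX: "P * X \<in> carrier_mat d d" and QPX: "Q * P * X \<in> carrier_mat d d"
    using Q P X by auto
  have "Q * P * X * dagger (Q * P) = Q * P * X * dagger P * dagger Q"
    using assoc_mult_mat[OF QPX dagger_carrier[OF P] dagger_carrier[OF Q]] by (simp add: dagger_mult[OF Q P])
  also have "Q * P * X * dagger P = Q * (P * X * dagger P)"
    using assoc_mult_mat[OF Q P X] assoc_mult_mat[OF Q PX dagger_carrier[OF P]] by simp
  finally show ?thesis .
qed

lemma mat_lincomb_conj: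
  assumes "finite J" "\<And>j. j \<in> J \<Longrightarrow> F j \<in> carrier_mat d d" and Q: "Q \<in> carrier_mat d d"
  shows "Q * mat_lincomb d F v J * dagger Q = mat_lincomb d (\<lambda>j. Q * F j * dagger Q) v J"
  using assms(1,2)
proof (induction J rule: finite_induct)
  case empty
  then show ?case
    using Q by (simp add: mat_lincomb_empty)
next
  case (insert j J)
  then have Fj: "F j \<in> carrier_mat d d" by simp
  have "Q * mat_lincomb d F v (insert j J) * dagger Q
      = complex_of_real (v j) \<cdot>\<^sub>m (Q * F j * dagger Q) + Q * mat_lincomb d F v J * dagger Q"
    using insert Fj Q by (simp add: mat_lincomb_insert conj_mat_add conj_mat_smult)
  moreover have "Q * F j * dagger Q \<in> carrier_mat d d"
    using mult_carrier_mat[OF mult_carrier_mat[OF Q Fj] dagger_carrier[OF Q]] .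
  ultimately show ?case
    using insert by (simp add: mat_lincomb_insert)
qed

definition givens_rot :: "nat \<Rightarrow> nat \<Rightarrow> real \<Rightarrow> (nat \<Rightarrow> real) \<Rightarrow> nat \<Rightarrow> real" where
  "givens_rot a b th v = v(a := cos th * v a + sin th * v b, b := cos th * v b - sin th * v a)"

lemma mat_lincomb_rotate:
  assumes J: "finite J" "a \<in> J" "b \<in> J" "a \<noteq> b" and F: "\<And>j. j \<in> J \<Longrightarrow> F j \<in> carrier_mat d d"
    and F'_other: "\<And>j. j \<in> J \<Longrightarrow> j \<noteq> a \<Longrightarrow> j \<noteq> b \<Longrightarrow> F' j = F j"
    and F'_a: "F' a = complex_of_real (cos th) \<cdot>\<^sub>m F a + complex_of_real (- sin th) \<cdot>\<^sub>m F b"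
    and F'_b: "F' b = complex_of_real (cos th) \<cdot>\<^sub>m F b + complex_of_real (sin th) \<cdot>\<^sub>m F a"
  shows "mat_lincomb d F' v J = mat_lincomb d F (givens_rot a b th v) J"
proof (rule eq_matI)
  fix r c assume "r < dim_row (mat_lincomb d F (givens_rot a b th v) J)"
    "c < dim_col (mat_lincomb d F (givens_rot a b th v) J)"
  then have rc: "r < d" "c < d" by simp_all
  let ?v' = "givens_rot a b th v"
  let ?t = "\<lambda>w G j. complex_of_real (w j) * G j $$ (r, c)"
  have split: "sum (?t w G) J = ?t w G a + ?t w G b + sum (?t w G) (J - {a, b})" for w G
    using J by (simp add: sum.remove[of J a] sum.remove[of "J - {a}" b] Diff_insert2[symmetric])
  have "sum (?t v F') (J - {a, b}) = sum (?t ?v' F) (J - {a, b})"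
    using F'_other J by (intro sum.cong) (auto simp: givens_rot_def)
  moreover have "?t v F' a + ?t v F' b = ?t ?v' F a + ?t ?v' F b"
    using F[OF J(2)] F[OF J(3)] J(4) rc by (simp add: F'_a F'_b givens_rot_def algebra_simps)
  ultimately show "mat_lincomb d F' v J $$ (r, c) = mat_lincomb d F ?v' J $$ (r, c)"
    using rc by (simp add: mat_lincomb_def split[of v F'] split[of ?v' F])
qed simp_all

lemma W_rotation_conj:
  assumes k: "1 \<le> k" "k \<le> n" and ab: "a \<in> {1..n}" "b \<in> {1..n}" "a \<noteq> b"
  shows "mat_exp ((- \<i> * th / 2) \<cdot>\<^sub>m (\<i> \<cdot>\<^sub>m (W n k a * W n k b))) * mat_lincomb (dimq n) (W n k) v {1..n}
           * dagger (mat_exp ((- \<i> * th / 2) \<cdot>\<^sub>m (\<i> \<cdot>\<^sub>m (W n k a * W n k b))))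
         = mat_lincomb (dimq n) (W n k) (givens_rot a b th v) {1..n}"
proof -
  have anticomm: "W n k j * W n k i = (-1) \<cdot>\<^sub>m (W n k i * W n k j)" if "i \<in> {1..n}" "j \<in> {1..n}" "i \<noteq> j" for i j
    using that by (intro W_anticomm[OF _ _ _ _ _ k]) auto
  interpret anticomm_involutions "dimq n" "W n k a" "W n k b"
    by (rule anticomm_involutions.intro[OF W_carrier[OF k] W_carrier[OF k] W_square[OF k] W_square[OF k]
          anticomm[OF ab] W_hermitian[OF k] W_hermitian[OF k]])
  have "rot th * mat_lincomb (dimq n) (W n k) v {1..n} * dagger (rot th)
      = mat_lincomb (dimq n) (\<lambda>j. rot th * W n k j * dagger (rot th)) v {1..n}"
    by (rule mat_lincomb_conj) (simp_all add: W_carrier[OF k] rot_carrier)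
  also have "\<dots> = mat_lincomb (dimq n) (W n k) (givens_rot a b th v) {1..n}"
  proof (rule mat_lincomb_rotate[OF _ ab])
    fix j assume "j \<in> {1..n}" "j \<noteq> a" "j \<noteq> b"
    then show "rot th * W n k j * dagger (rot th) = W n k j"
      using ab by (intro rot_conj_anticomm_both W_carrier[OF k] anticomm) auto
  qed (simp_all add: W_carrier[OF k] rot_conj_A rot_conj_B)
  finally show ?thesis
    by (simp add: rot_def gen_def)
qed

definition R_step :: "nat \<Rightarrow> nat \<Rightarrow> nat \<Rightarrow> (nat \<Rightarrow> real) \<Rightarrow> nat \<Rightarrow> real" where
  "R_step n k m =
    (if m < k then givens_rot (m + 1) m (theta n k m) else givens_rot m (m + 1) (theta n k m))"

lemma R_carrier:
  assumes "1 \<le> k" "k \<le> n"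
  shows "R n k m \<in> carrier_mat (dimq n) (dimq n)"
  unfolding R_def G_def
  by (cases "m < k") (auto intro!: mat_exp_carrier smult_carrier_mat mult_carrier_mat W_carrier[OF assms])

lemma R_conj_lincomb:
  assumes "1 \<le> k" "k \<le> n" "1 \<le> m" "m < n"
  shows "R n k m * mat_lincomb (dimq n) (W n k) v {1..n} * dagger (R n k m)
       = mat_lincomb (dimq n) (W n k) (R_step n k m v) {1..n}"
  using assms W_rotation_conj[OF assms(1,2), of "m + 1" m] W_rotation_conj[OF assms(1,2), of m "m + 1"]
  by (simp add: R_def G_def R_step_def)

lemma mprod_Cons: "mprod d (M # Ms) = M * mprod d Ms"
  by (simp add: mprod_def)

lemma mprod_carrier: "(\<And>M. M \<in> set Ms \<Longrightarrow> M \<in> carrier_mat d d) \<Longrightarrow> mprod d Ms \<in> carrier_mat d d"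
  by (induction Ms) (auto simp: mprod_def intro: mult_carrier_mat)

lemma mprod_R_conj_lincomb:
  assumes k: "1 \<le> k" "k \<le> n" and ms: "set ms \<subseteq> {1..<n}"
  shows "mprod (dimq n) (map (R n k) ms) * mat_lincomb (dimq n) (W n k) v {1..n} * dagger (mprod (dimq n) (map (R n k) ms))
       = mat_lincomb (dimq n) (W n k) (foldr (R_step n k) ms v) {1..n}"
  using ms
proof (induction ms)
  case Nil
  then show ?case by (simp add: mprod_def)
next
  case (Cons m ms)
  let ?d = "dimq n" and ?L = "\<lambda>v. mat_lincomb (dimq n) (W n k) v {1..n}"
  let ?P = "mprod ?d (map (R n k) ms)"
  have R: "R n k m \<in> carrier_mat ?d ?d" and P: "?P \<in> carrier_mat ?d ?d"
    using R_carrier[OF k] by (auto intro!: mprod_carrier)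
  have "mprod ?d (map (R n k) (m # ms)) * ?L v * dagger (mprod ?d (map (R n k) (m # ms)))
      = R n k m * (?P * ?L v * dagger ?P) * dagger (R n k m)"
    by (simp add: mprod_Cons conj_mat_mult[OF R P])
  also have "\<dots> = ?L (foldr (R_step n k) (m # ms) v)"
    using Cons R_conj_lincomb[OF k, of m] by simp
  finally show ?case .
qed

lemma Ok_eq_lincomb:
  assumes "1 \<le> k" "k \<le> n"
  shows "Ok n k = mat_lincomb (dimq n) (W n k) (cc n k) {1..n}"
proof -
  have sum_list: "foldr (+) (map (\<lambda>j. complex_of_real (cc n k j) \<cdot>\<^sub>m W n k j) L) (0\<^sub>m (dimq n) (dimq n))
      = mat_lincomb (dimq n) (W n k) (cc n k) (set L)" if "distinct L" for L
    using that by (induction L) (simp_all add: mat_lincomb_empty mat_lincomb_insert W_carrier[OF assms])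
  have "Ok n k = mat_lincomb (dimq n) (W n k) (cc n k) (set [1..<n+1])"
    unfolding Ok_def by (rule sum_list) simp
  also have "set [1..<n+1] = {1..n}"
    by auto
  finally show ?thesis .
qed

section \<open>The Givens sweeps on the coefficient vector\<close>

lemma cos_sin_arctan_ratio:
  fixes p q :: real
  assumes "0 < p"
  shows "cos (arctan (q / p)) = p / sqrt (p\<^sup>2 + q\<^sup>2)" and "sin (arctan (q / p)) = q / sqrt (p\<^sup>2 + q\<^sup>2)"
proof -
  have "sqrt (1 + (q / p)\<^sup>2) = sqrt (p\<^sup>2 + q\<^sup>2) / p"
    using assms by (simp add: field_simps real_sqrt_divide)
  then show "cos (arctan (q / p)) = p / sqrt (p\<^sup>2 + q\<^sup>2)" "sin (arctan (q / p)) = q / sqrt (p\<^sup>2 + q\<^sup>2)"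
    using assms by (simp_all add: cos_arctan sin_arctan)
qed

lemma givens_rot_arctan:
  assumes "0 < v a" "a \<noteq> b"
  shows "givens_rot a b (arctan (v b / v a)) v = v(a := sqrt ((v a)\<^sup>2 + (v b)\<^sup>2), b := 0)"
proof -
  have "0 < (v a)\<^sup>2 + (v b)\<^sup>2"
    using assms by (simp add: add_pos_nonneg)
  then have "v a * v a / sqrt ((v a)\<^sup>2 + (v b)\<^sup>2) + v b * v b / sqrt ((v a)\<^sup>2 + (v b)\<^sup>2) = sqrt ((v a)\<^sup>2 + (v b)\<^sup>2)"
    by (simp add: add_divide_distrib[symmetric] real_div_sqrt power2_eq_square)
  then show ?thesis
    using assms by (auto simp: givens_rot_def cos_sin_arctan_ratio algebra_simps)
qed

lemma eps_pos: "2 \<le> n \<Longrightarrow> 0 < eps n"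
  by (simp add: eps_def)

lemma cc_diag_pos: "2 \<le> n \<Longrightarrow> 0 < cc n k k"
  by (simp add: cc_def)

lemma coeffs_square_sum: "2 \<le> n \<Longrightarrow> real (n - 1) * (eps n)\<^sup>2 + (cc n k k)\<^sup>2 = 1"
  by (simp add: eps_def cc_def power_divide of_nat_diff field_simps)

definition swept_coeff :: "nat \<Rightarrow> nat \<Rightarrow> real" where
  "swept_coeff n k = sqrt (real (k - 1) * (eps n)\<^sup>2 + (cc n k k)\<^sup>2)"

lemma swept_coeff_pos: "2 \<le> n \<Longrightarrow> 0 < swept_coeff n k"
  using cc_diag_pos[of n k] by (simp add: swept_coeff_def add_nonneg_pos)

lemma swept_coeff_square: "(swept_coeff n k)\<^sup>2 = real (k - 1) * (eps n)\<^sup>2 + (cc n k k)\<^sup>2"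
  by (simp add: swept_coeff_def)

lemma sqrt_add_eps_square:
  assumes "2 \<le> n"
  shows "sqrt ((eps n)\<^sup>2 + (sqrt (real m) * eps n)\<^sup>2) = sqrt (real m + 1) * eps n"
proof -
  have "(eps n)\<^sup>2 + (sqrt (real m) * eps n)\<^sup>2 = (real m + 1) * (eps n)\<^sup>2"
    by (simp add: power_mult_distrib algebra_simps)
  then show ?thesis
    using eps_pos[OF assms] by (simp add: real_sqrt_mult)
qed

text \<open>The coefficient vectors after conjugating by \<open>R\<^sub>m\<^sub>-\<^sub>1 \<dots> R\<^sub>1\<close>, resp. by
  \<open>R\<^sub>m \<dots> R\<^sub>n\<^sub>-\<^sub>1\<close> after the complete left sweep. Entries outside \<open>{1..n}\<close> do not
  contribute to \<open>mat_lincomb\<close>; they are set to \<open>0\<close> so that the two sweeps meet in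
  an equation of functions.\<close>

definition coeffs_left :: "nat \<Rightarrow> nat \<Rightarrow> nat \<Rightarrow> nat \<Rightarrow> real" where
  "coeffs_left n k m j =
    (if j < m \<or> n < j then 0
     else if j = m then (if m < k then sqrt (real m) * eps n else swept_coeff n k)
     else cc n k j)"

definition coeffs_right :: "nat \<Rightarrow> nat \<Rightarrow> nat \<Rightarrow> nat \<Rightarrow> real" where
  "coeffs_right n k m j =
    (if m = k then (if j = k then 1 else 0)
     else if j < k \<or> m < j then 0
     else if j = k then swept_coeff n k
     else if j < m then eps n
     else sqrt (real (n - m + 1)) * eps n)"

lemma R_step_left:
  assumes n: "2 \<le> n" and m: "1 \<le> m" "m < k" "k \<le> n"
  shows "R_step n k m (coeffs_left n k m) = coeffs_left n k (Suc m)"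
proof -
  let ?v = "coeffs_left n k m"
  have pos: "0 < ?v (m + 1)"
    using m eps_pos[OF n] cc_diag_pos[OF n] by (auto simp: coeffs_left_def cc_def)
  have "theta n k m = arctan (?v m / ?v (m + 1)) \<and>
        sqrt ((?v (m + 1))\<^sup>2 + (?v m)\<^sup>2) = coeffs_left n k (Suc m) (m + 1)"
  proof (cases "m + 1 < k")
    case True
    then show ?thesis
      using m eps_pos[OF n] sqrt_add_eps_square[OF n, of m]
      by (simp add: theta_def coeffs_left_def cc_def)
  next
    case False
    then have "k = m + 1" using m by simp
    then show ?thesis
      using m by (simp add: theta_def coeffs_left_def swept_coeff_def power_mult_distrib add.commute)
  qed
  then have "R_step n k m ?v = ?v(m + 1 := coeffs_left n k (Suc m) (m + 1), m := 0)"
    using m givens_rot_arctan[of ?v "m + 1" m, OF pos] by (simp add: R_step_def)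
  also have "\<dots> = coeffs_left n k (Suc m)"
    using m by (auto simp: coeffs_left_def)
  finally show ?thesis .
qed

lemma R_step_right:
  assumes n: "2 \<le> n" and m: "1 \<le> k" "k \<le> m" "m < n"
  shows "R_step n k m (coeffs_right n k (Suc m)) = coeffs_right n k m"
proof -
  let ?v = "coeffs_right n k (Suc m)"
  have pos: "0 < ?v m"
    using m eps_pos[OF n] swept_coeff_pos[OF n] by (auto simp: coeffs_right_def)
  have "theta n k m = arctan (?v (m + 1) / ?v m) \<and>
        sqrt ((?v m)\<^sup>2 + (?v (m + 1))\<^sup>2) = coeffs_right n k m m"
  proof (cases "k < m")
    case True
    then show ?thesis
      using m eps_pos[OF n] sqrt_add_eps_square[OF n, of "n - m"]
      by (simp add: theta_def coeffs_right_def Suc_diff_le)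
  next
    case False
    then have "k = m" using m by simp
    moreover have "(swept_coeff n k)\<^sup>2 + (sqrt (real (n - k)) * eps n)\<^sup>2 = 1"
      using m coeffs_square_sum[OF n, of k]
      by (simp add: swept_coeff_square power_mult_distrib of_nat_diff algebra_simps)
    ultimately show ?thesis
      using m by (simp add: theta_def coeffs_right_def swept_coeff_def)
  qed
  then have "R_step n k m ?v = ?v(m := coeffs_right n k m m, m + 1 := 0)"
    using m givens_rot_arctan[of ?v m "m + 1", OF pos] by (simp add: R_step_def)
  also have "\<dots> = coeffs_right n k m"
    using m by (auto simp: coeffs_right_def)
  finally show ?thesis .
qed

lemma left_sweep:
  assumes n: "2 \<le> n" "k \<le> n" and m: "1 \<le> m" "m \<le> k"
  shows "foldr (R_step n k) (rev [1..<m]) (coeffs_left n k 1) = coeffs_left n k m"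
  using m
proof (induction m rule: nat_induct_at_least)
  case (Suc m)
  then show ?case
    using R_step_left[OF n(1) Suc(1) _ n(2)] by simp
qed simp

lemma right_sweep:
  assumes n: "2 \<le> n" "1 \<le> k" "k \<le> n"
  shows "foldr (R_step n k) [k..<n] (coeffs_left n k k) = coeffs_right n k k"
proof -
  have "foldr (R_step n k) [m..<n] (coeffs_left n k k) = coeffs_right n k m" if "k \<le> m" "m \<le> n" for m
    using that(2,1)
  proof (induction m rule: inc_induct)
    case base
    have "swept_coeff n n = 1"
      using coeffs_square_sum[OF n(1), of n] by (simp add: swept_coeff_def)
    then show ?case
      using n by (intro ext) (auto simp: coeffs_left_def coeffs_right_def cc_def)
  next
    case (step m)
    then show ?case
      using R_step_right[OF n(1,2), of m] by (simp add: upt_conv_Cons)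
  qed
  then show ?thesis
    using n by simp
qed

theorem theorem1:
  fixes n k :: nat
  assumes "n \<ge> 2" and "1 \<le> k" and "k \<le> n"
  shows "U n k * Ok n k * dagger (U n k) = Ek n k"
proof -
  let ?d = "dimq n" and ?L = "\<lambda>v. mat_lincomb (dimq n) (W n k) v {1..n}"
  have UL: "UL n k \<in> carrier_mat ?d ?d" and UR: "UR n k \<in> carrier_mat ?d ?d"
    using R_carrier[OF assms(2,3)] by (auto simp: UL_def UR_def intro!: mprod_carrier)
  have Ok: "Ok n k = ?L (coeffs_left n k 1)"
    using assms by (auto simp: Ok_eq_lincomb coeffs_left_def cc_def swept_coeff_def intro!: mat_lincomb_cong)
  have "U n k * Ok n k * dagger (U n k) = UR n k * (UL n k * Ok n k * dagger (UL n k)) * dagger (UR n k)"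
    unfolding U_def Ok by (rule conj_mat_mult[OF UR UL mat_lincomb_carrier])
  also have "UL n k * Ok n k * dagger (UL n k) = ?L (coeffs_left n k k)"
    using assms mprod_R_conj_lincomb[OF assms(2,3), of "rev [1..<k]"] left_sweep[OF assms(1,3), of k]
    by (simp add: UL_def Ok)
  also have "UR n k * ?L (coeffs_left n k k) * dagger (UR n k) = ?L (coeffs_right n k k)"
    using assms mprod_R_conj_lincomb[OF assms(2,3), of "[k..<n]"] right_sweep[OF assms]
    by (simp add: UR_def)
  also have "coeffs_right n k k = (\<lambda>j. if j = k then 1 else 0)"
    by (simp add: coeffs_right_def fun_eq_iff)
  also have "?L \<dots> = W n k k"
    using W_carrier[OF assms(2,3)] assms by (simp add: mat_lincomb_unit)
  finally show ?thesis
    by (simp add: Ek_def)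
qed

end
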